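(* Let $p$ be a prime, $A\cong C_p\times C_p$, $G$ an abelian group acting on $A$ and $H\le G$. If $f\in\mathcal{E}(G,H,A)$ and $a\in A$ satisfies $f(a)<0$, then $\mathrm{C}_G(a)=\mathrm{C}_G(A)$.
   Context: $\mathrm{C}_G(S)$ denotes the pointwise stabilizer of $S\subseteq A$ in $G$. Definition of $\mathcal{E}(G,H,A)$ (for a group $G$ acting on a finite abelian group $A$ and $H\le G$): the set of functions $f:A\to\mathbb{Z}$ constant on $H$-orbits such that (I) $\sum_{X\in\mathrm{Cl}_H(A)}f(X)=1$, where $\mathrm{Cl}_H(A)$ is the set of $H$-orbits; (II) $f$ vanishes outside a single local $G$-class of $A$ ($a,b$ locally $G$-conjugate iff $a_r,b_r$ are $G$-conjugate for every prime $r$, $a_r$ the $r$-part); (III) $\sum_{c\in C}|\mathrm{C}_H(c)|f(c)\ge0$ for every coset $C$ of a minimal cocyclic subgroup of $A$ (a subgroup $L$ with $A/L$ cyclic, minimal with this property); (IV) $f(a)\ge -h_A[\mathrm{C}_H(a_{\pi_0}):\mathrm{C}_H(a)]$ for all $a$, where $\pi_0$ is the set of primes $r$ dividing $|A|$ with $A_r$ cyclic and $h_A=\frac{\sum_{X\in\pi^-}\prod_{r\in\pi}(r^{k_r-\Delta_X(r)}-1)}{\prod_{r\in\pi}(r-1)r^{k_r-1}}$ with $\pi$ the primes dividing $|A|$, $\pi^-$ the odd-cardinality subsets of $\pi$, $\Delta_X$ the characteristic function of $X$, $k_r$ the rank of the socle of $A_r$; (V) $f(a)<0$ for some $a$. 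*)

theory Defs
  imports "HOL-Algebra.Algebra" "HOL-Computational_Algebra.Primes"
begin

definition cent :: "'g set \<Rightarrow> ('g \<Rightarrow> 'a \<Rightarrow> 'a) \<Rightarrow> 'a set \<Rightarrow> 'g set" where
  "cent K \<phi> S = {g \<in> K. \<forall>s\<in>S. \<phi> g s = s}"

text \<open>The r-part a_r is pi_part A {r} a.\<close>
definition pi_part :: "'a monoid \<Rightarrow> nat set \<Rightarrow> 'a \<Rightarrow> 'a" where
  "pi_part A S a = (THE b. b \<in> carrier A \<and> (\<exists>k::nat. b = a [^]\<^bsub>A\<^esub> k)
      \<and> (\<forall>q. Factorial_Ring.prime q \<and> q dvd group.ord A b \<longrightarrow> q \<in> S)
      \<and> (\<forall>q\<in>S. \<not> q dvd group.ord A (a \<otimes>\<^bsub>A\<^esub> inv\<^bsub>A\<^esub> b)))"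

definition loc_conj :: "'g monoid \<Rightarrow> ('g \<Rightarrow> 'a \<Rightarrow> 'a) \<Rightarrow> 'a monoid \<Rightarrow> 'a \<Rightarrow> 'a \<Rightarrow> bool" where
  "loc_conj G \<phi> A a b =
     (\<forall>r::nat. Factorial_Ring.prime r \<longrightarrow> (\<exists>g\<in>carrier G. \<phi> g (pi_part A {r} a) = pi_part A {r} b))"

definition orbits_set :: "'g set \<Rightarrow> ('g \<Rightarrow> 'a \<Rightarrow> 'a) \<Rightarrow> 'a monoid \<Rightarrow> 'a set set" where
  "orbits_set H \<phi> A = {{\<phi> h a | h. h \<in> H} | a. a \<in> carrier A}"

definition cocyclic :: "'a monoid \<Rightarrow> 'a set \<Rightarrow> bool" where
  "cocyclic A L = (subgroup L A \<and> cyclic_group (A Mod L))"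

definition min_cocyclic :: "'a monoid \<Rightarrow> 'a set \<Rightarrow> bool" where
  "min_cocyclic A L = (cocyclic A L \<and> (\<forall>L'. cocyclic A L' \<and> L' \<subseteq> L \<longrightarrow> L' = L))"

definition primes_of :: "'a monoid \<Rightarrow> nat set" where
  "primes_of A = {r. Factorial_Ring.prime r \<and> r dvd card (carrier A)}"

definition sylow_part :: "'a monoid \<Rightarrow> nat \<Rightarrow> 'a set" where
  "sylow_part A r = {x \<in> carrier A. \<exists>e::nat. group.ord A x = r ^ e}"

definition pi0 :: "'a monoid \<Rightarrow> nat set" where
  "pi0 A = {r \<in> primes_of A. cyclic_group (subgroup_generated A (sylow_part A r))}"

definition socle_rank :: "'a monoid \<Rightarrow> nat \<Rightarrow> nat" where
  "socle_rank A r = multiplicity r (card {x \<in> sylow_part A r. x [^]\<^bsub>A\<^esub> r = \<one>\<^bsub>A\<^esub>})"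

definition hA :: "'a monoid \<Rightarrow> real" where
  "hA A =
    sum (\<lambda>Q. prod (\<lambda>r. real r ^ (socle_rank A r - (if r \<in> Q then 1 else 0)) - 1) (primes_of A))
        {Y. Y \<subseteq> primes_of A \<and> odd (card Y)}
    / prod (\<lambda>r. (real r - 1) * real r ^ (socle_rank A r - 1)) (primes_of A)"

text \<open>The set E(G,H,A). The value f(X) on an orbit X is f of any element of X.\<close>
definition calE :: "'g monoid \<Rightarrow> 'g set \<Rightarrow> 'a monoid \<Rightarrow> ('g \<Rightarrow> 'a \<Rightarrow> 'a) \<Rightarrow> ('a \<Rightarrow> int) set" where
  "calE G H A \<phi> = {f.
     (\<forall>h\<in>H. \<forall>a\<in>carrier A. f (\<phi> h a) = f a)
   \<and> (\<Sum>Orb\<in>orbits_set H \<phi> A. f (SOME x. x \<in> Orb)) = 1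
   \<and> (\<exists>c\<in>carrier A. \<forall>a\<in>carrier A. f a \<noteq> 0 \<longrightarrow> loc_conj G \<phi> A c a)
   \<and> (\<forall>L C. min_cocyclic A L \<and> C \<in> rcosets\<^bsub>A\<^esub> L \<longrightarrow>
          (\<Sum>c\<in>C. int (card (cent H \<phi> {c})) * f c) \<ge> 0)
   \<and> (\<forall>a\<in>carrier A. real_of_int (f a) \<ge>
          - hA A * (real (card (cent H \<phi> {pi_part A (pi0 A) a})) / real (card (cent H \<phi> {a}))))
   \<and> (\<exists>a\<in>carrier A. f a < 0)}"

end

theory Submission
  imports Defs
begin

text \<open>Suppose some g in G fixes a but not all of A. Since G is abelian, g fixes every
  point of the H-orbit of a, so this orbit lies in the fixed-point subgroup of g, a proper
  subgroup of A = C_p x C_p, hence of order at most p; as the H-action is by automorphisms,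
  the orbit of a \<noteq> 1 also avoids 1, so it has at most p - 1 elements. By orbit-stabilizer,
  condition (IV) then yields f(a) \<ge> -h_A (p - 1), and for a p-group A one has
  h_A (p - 1) = (p^m - 1)/p^m < 1, so the integer f(a) cannot be negative.\<close>

lemma group_action_restrict:
  assumes "group_action G E \<phi>" "subgroup H G"
  shows "group_action (G\<lparr>carrier := H\<rparr>) E \<phi>"
  using assms group_hom.induced_group_hom' unfolding group_action_def by blast

lemma stabilizer_restrict:
  "stabilizer (G\<lparr>carrier := H\<rparr>) \<phi> a = cent H \<phi> {a}"
  unfolding stabilizer_def cent_def by auto

lemma (in group) subgroup_fixed_points:
  assumes "h \<in> hom G G"
  shows "subgroup {x \<in> carrier G. h x = x} G"
proof (rule subgroupI)
  interpret group_hom G G h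
    using assms group_axioms by (simp add: group_hom_def group_hom_axioms_def)
  show "inv x \<in> {x \<in> carrier G. h x = x}" if "x \<in> {x \<in> carrier G. h x = x}" for x
    using that by auto
  show "x \<otimes> y \<in> {x \<in> carrier G. h x = x}"
    if "x \<in> {x \<in> carrier G. h x = x}" "y \<in> {x \<in> carrier G. h x = x}" for x y
    using that by auto
qed (use assms in \<open>auto simp: hom_one[of h]\<close>)

lemma (in group) card_proper_subgroup_prime_square:
  assumes "Factorial_Ring.prime p" "card (carrier G) = p ^ 2" "subgroup F G" "F \<noteq> carrier G"
  shows "card F \<le> p"
proof -
  have p1: "1 < p"
    using assms(1) prime_gt_1_nat by blast
  have "card (rcosets F) * card F = p ^ 2"
    using lagrange[OF assms(3)] assms(2) unfolding order_def by simp
  then have "card F dvd p ^ 2"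
    by (metis dvd_triv_right)
  then obtain i where i: "card F = p ^ i"
    using divides_primepow_nat[OF assms(1)] by blast
  have "finite (carrier G)"
    using assms(2) p1 card_gt_0_iff by force
  then have "card F < card (carrier G)"
    using assms(3,4) subgroup.subset by (intro psubset_card_mono) auto
  then have "i < 2"
    using i assms(2) p1 power_less_imp_less_exp by metis
  then show ?thesis
    using i p1 power_increasing[of i 1 p] by simp
qed

lemma primes_of_prime_power:
  assumes "Factorial_Ring.prime p" "card (carrier A) = p ^ Suc n"
  shows "primes_of A = {p}"
proof -
  have "r dvd p ^ Suc n \<longleftrightarrow> r = p" if "Factorial_Ring.prime r" for r
    using that assms(1) prime_dvd_power[of r p "Suc n"] primes_dvd_imp_eq[of r p] by auto
  then show ?thesis
    using assms unfolding primes_of_def by auto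
qed

lemma hA_nonneg: "hA A \<ge> 0"
proof -
  have "real r \<ge> 1" if "r \<in> primes_of A" for r
    using that prime_ge_1_nat unfolding primes_of_def by fastforce
  then show ?thesis
    unfolding hA_def by (intro divide_nonneg_nonneg sum_nonneg prod_nonneg) (auto intro: one_le_power)
qed

lemma hA_prime_power_bound:
  assumes "Factorial_Ring.prime p" "primes_of A = {p}"
  shows "hA A * (real p - 1) < 1"
proof -
  define m where "m = socle_rank A p - 1"
  have p2: "real p \<ge> 2"
    using prime_ge_2_nat[OF assms(1)] by linarith
  have "{Y. Y \<subseteq> {p} \<and> odd (card Y)} = {{p}}"
    by (auto simp: subset_singleton_iff)
  then have "hA A = (real p ^ m - 1) / ((real p - 1) * real p ^ m)"
    unfolding hA_def assms(2) m_def by simp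
  then have "hA A * (real p - 1) = (real p ^ m - 1) / real p ^ m"
    using p2 by (simp add: field_simps)
  also have "\<dots> < 1"
    using p2 by (simp add: divide_less_eq one_le_power)
  finally show ?thesis .
qed

text \<open>Condition (IV) combined with |C_H(a_pi0)| \<le> |H| = |orbit of a| * |C_H(a)|.\<close>

lemma calE_orbit_bound:
  assumes "f \<in> calE G H A \<phi>" "group_action G (carrier A) \<phi>" "subgroup H G" "finite H"
    and "a \<in> carrier A"
  shows "real_of_int (f a) \<ge> - hA A * real (card (orbit (G\<lparr>carrier := H\<rparr>) \<phi> a))"
proof -
  define b where "b = pi_part A (pi0 A) a"
  interpret H: group_action "G\<lparr>carrier := H\<rparr>" "carrier A" \<phi>
    using group_action_restrict[OF assms(2,3)] .
  have orbit_stabilizer: "card (orbit (G\<lparr>carrier := H\<rparr>) \<phi> a) * card (cent H \<phi> {a}) = card H"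
    using H.orbit_stabilizer_theorem[OF assms(5)] by (simp add: order_def stabilizer_restrict)
  moreover have "card H > 0"
    using assms(3,4) subgroup.one_closed card_gt_0_iff by blast
  ultimately have stab_pos: "card (cent H \<phi> {a}) > 0"
    by (metis mult_0_right gr0I)
  have "card (cent H \<phi> {b}) \<le> card H"
    using assms(4) unfolding cent_def by (intro card_mono) auto
  then have "real (card (cent H \<phi> {b})) / real (card (cent H \<phi> {a}))
      \<le> real (card (orbit (G\<lparr>carrier := H\<rparr>) \<phi> a))"
    using stab_pos orbit_stabilizer
    by (simp add: divide_le_eq) (metis of_nat_le_iff of_nat_mult)
  then have "hA A * (real (card (cent H \<phi> {b})) / real (card (cent H \<phi> {a})))
      \<le> hA A * real (card (orbit (G\<lparr>carrier := H\<rparr>) \<phi> a))"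
    using hA_nonneg by (rule mult_left_mono)
  moreover have "real_of_int (f a)
      \<ge> - hA A * (real (card (cent H \<phi> {b})) / real (card (cent H \<phi> {a})))"
    using assms(1,5) unfolding calE_def b_def by blast
  ultimately show ?thesis
    by linarith
qed

lemma (in group_action) orbit_subset_invariants:
  assumes "comm_group G" "subgroup H G" "g \<in> carrier G" "a \<in> E" "\<phi> g a = a"
  shows "orbit (G\<lparr>carrier := H\<rparr>) \<phi> a \<subseteq> invariants E \<phi> g"
proof
  fix y
  assume "y \<in> orbit (G\<lparr>carrier := H\<rparr>) \<phi> a"
  then obtain h where h: "h \<in> carrier G" "y = \<phi> h a"
    using subgroup.subset[OF assms(2)] unfolding orbit_def by auto
  have "\<phi> g y = \<phi> (h \<otimes>\<^bsub>G\<^esub> g) a"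
    using composition_rule assms(3,4) h comm_monoid.m_comm[OF comm_group.axioms(1)[OF assms(1)]]
    by metis
  also have "\<dots> = y"
    using composition_rule assms(3-5) h by simp
  finally show "y \<in> invariants E \<phi> g"
    using element_image h assms(4) unfolding invariants_def by blast
qed

lemma orbit_avoids_one:
  assumes "group_action G (carrier A) \<phi>" "\<forall>g\<in>carrier G. \<phi> g \<in> hom A A" "group A"
    and "H \<subseteq> carrier G" "a \<in> carrier A" "a \<noteq> \<one>\<^bsub>A\<^esub>"
  shows "\<one>\<^bsub>A\<^esub> \<notin> orbit (G\<lparr>carrier := H\<rparr>) \<phi> a"
proof
  assume "\<one>\<^bsub>A\<^esub> \<in> orbit (G\<lparr>carrier := H\<rparr>) \<phi> a"
  then obtain h where h: "h \<in> carrier G" "\<phi> h a = \<one>\<^bsub>A\<^esub>"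
    using assms(4) unfolding orbit_def by auto
  have "\<phi> h \<one>\<^bsub>A\<^esub> = \<one>\<^bsub>A\<^esub>"
    using assms(2,3) h(1) by (simp add: group_hom.hom_one group_hom_def group_hom_axioms_def)
  then show False
    using group_action.inj_prop[OF assms(1) h(1)] h(2) assms(3,5,6)
    by (metis inj_onD group.is_monoid monoid.one_closed)
qed

lemma card_orbit_le_pred_prime:
  assumes "Factorial_Ring.prime p" "group A" "card (carrier A) = p ^ 2"
    and "comm_group G" "group_action G (carrier A) \<phi>" "\<forall>g\<in>carrier G. \<phi> g \<in> hom A A"
    and "subgroup H G" "a \<in> carrier A"
    and "g \<in> carrier G" "\<phi> g a = a" "x \<in> carrier A" "\<phi> g x \<noteq> x"
  shows "card (orbit (G\<lparr>carrier := H\<rparr>) \<phi> a) \<le> p - 1"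
proof (cases "a = \<one>\<^bsub>A\<^esub>")
  case True
  have "\<phi> h \<one>\<^bsub>A\<^esub> = \<one>\<^bsub>A\<^esub>" if "h \<in> H" for h
    using that assms(2,6) subgroup.subset[OF assms(7)]
    by (auto simp: group_hom.hom_one group_hom_def group_hom_axioms_def)
  then have "orbit (G\<lparr>carrier := H\<rparr>) \<phi> a \<subseteq> {\<one>\<^bsub>A\<^esub>}"
    unfolding orbit_def True by auto
  then have "card (orbit (G\<lparr>carrier := H\<rparr>) \<phi> a) \<le> 1"
    using card_mono[of "{\<one>\<^bsub>A\<^esub>}"] by simp
  then show ?thesis
    using prime_ge_2_nat[OF assms(1)] by simp
next
  case False
  let ?F = "invariants (carrier A) \<phi> g"
  have F: "subgroup ?F A"
    using group.subgroup_fixed_points[OF assms(2)] assms(6,9) unfolding invariants_def by blast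
  have "card ?F \<le> p"
    using group.card_proper_subgroup_prime_square[OF assms(2,1,3) F] assms(11,12)
    unfolding invariants_def by blast
  have "finite (carrier A)"
    using assms(3) prime_gt_0_nat[OF assms(1)] card_gt_0_iff by (metis zero_less_power)
  then have "finite ?F"
    unfolding invariants_def by simp
  have "orbit (G\<lparr>carrier := H\<rparr>) \<phi> a \<subseteq> ?F - {\<one>\<^bsub>A\<^esub>}"
    using group_action.orbit_subset_invariants[OF assms(5,4,7,9,8,10)]
      orbit_avoids_one[OF assms(5,6,2) subgroup.subset[OF assms(7)] assms(8) False] by blast
  then have "card (orbit (G\<lparr>carrier := H\<rparr>) \<phi> a) \<le> card (?F - {\<one>\<^bsub>A\<^esub>})"
    using \<open>finite ?F\<close> by (intro card_mono) auto
  also have "\<dots> = card ?F - 1"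
    using subgroup.one_closed[OF F] by simp
  finally show ?thesis
    using \<open>card ?F \<le> p\<close> by linarith
qed

theorem lemma5p1:
  fixes G :: "'g monoid" and A :: "'a monoid" and \<phi> :: "'g \<Rightarrow> 'a \<Rightarrow> 'a"
    and H :: "'g set" and f :: "'a \<Rightarrow> int" and p :: nat and a :: 'a
  assumes "Factorial_Ring.prime p"
    and "comm_group A"
    and "A \<cong> integer_mod_group p \<times>\<times> integer_mod_group p"
    and "comm_group G" and "finite (carrier G)"
    and "group_action G (carrier A) \<phi>"
    and "\<forall>g\<in>carrier G. \<phi> g \<in> hom A A"
    and "subgroup H G"
    and "f \<in> calE G H A \<phi>"
    and "a \<in> carrier A" and "f a < 0"
  shows "cent (carrier G) \<phi> {a} = cent (carrier G) \<phi> (carrier A)"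
proof (rule ccontr)
  assume "cent (carrier G) \<phi> {a} \<noteq> cent (carrier G) \<phi> (carrier A)"
  then obtain g x where g: "g \<in> carrier G" "\<phi> g a = a" "x \<in> carrier A" "\<phi> g x \<noteq> x"
    using assms(10) unfolding cent_def by auto
  have card_A: "card (carrier A) = p ^ 2"
    using iso_same_card[OF assms(3)] prime_gt_0_nat[OF assms(1)]
    by (simp add: carrier_integer_mod_group card_cartesian_product power2_eq_square)
  have "card (orbit (G\<lparr>carrier := H\<rparr>) \<phi> a) \<le> p - 1"
    using card_orbit_le_pred_prime[OF assms(1) comm_group.axioms(2)[OF assms(2)] card_A
        assms(4,6,7,8,10) g] .
  then have "real (card (orbit (G\<lparr>carrier := H\<rparr>) \<phi> a)) \<le> real p - 1"
    using prime_ge_1_nat[OF assms(1)] by linarith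
  then have "hA A * real (card (orbit (G\<lparr>carrier := H\<rparr>) \<phi> a)) \<le> hA A * (real p - 1)"
    using hA_nonneg by (rule mult_left_mono)
  moreover have "hA A * (real p - 1) < 1"
    using hA_prime_power_bound[OF assms(1) primes_of_prime_power[OF assms(1), of A 1]] card_A
    by (simp add: numeral_2_eq_2)
  moreover have "real_of_int (f a) \<ge> - hA A * real (card (orbit (G\<lparr>carrier := H\<rparr>) \<phi> a))"
    using calE_orbit_bound[OF assms(9,6,8) _ assms(10)] assms(5,8) subgroup.subset finite_subset
    by metis
  ultimately have "real_of_int (f a) > -1"
    by linarith
  then show False
    using assms(11) by linarith
qed

end
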